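(* Let $(\mathcal{X},d_\mathcal{X})$, $(\mathcal{Y}_k,d_{\mathcal{Y}_k})$, $k=1,\dots,K$, be compact metric spaces, $c_k:\mathcal{X}\times\mathcal{Y}_k\to\mathbb{R}_+$ continuous, and assume that for every $Y=(y_1,\dots,y_K)\in\mathcal{Y}:=\mathcal{Y}_1\times\cdots\times\mathcal{Y}_K$ the problem $\min_{x\in\mathcal{X}}C(x,Y)$, with $C(x,Y):=\sum_{k=1}^K c_k(x,y_k)$, has a unique minimiser $B(Y)$. Assume moreover that there exist $x\in\mathcal{X}$ and $Y\in\mathcal{Y}$ with $x\neq B(Y)$, and let $R:=\max_{(x,Y)\in\mathcal{X}\times\mathcal{Y}} d_\mathcal{X}(x,B(Y))$. Then there exists a function $\delta=\eta\circ d_\mathcal{X}$, where $\eta:[0,R]\to\mathbb{R}_+$ is lower semi-continuous, non-decreasing and satisfies $\eta(s)=0\iff s=0$, such that $$\forall (x,Y)\in\mathcal{X}\times\mathcal{Y},\quad C(x,Y)\ge C(B(Y),Y)+\delta(x,B(Y)).$$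
   Context: $\mathcal{Y}$ is equipped with the product distance; $B$ is continuous so $R$ is finite and positive under the stated assumptions. *)

theory Defs
  imports "HOL-Analysis.Analysis"
begin

definition lsc_on :: "real set \<Rightarrow> (real \<Rightarrow> real) \<Rightarrow> bool" where
  "lsc_on S f \<longleftrightarrow>
     (\<forall>x\<in>S. \<forall>t. t < f x \<longrightarrow> (\<exists>e>0. \<forall>y\<in>S. dist y x < e \<longrightarrow> t < f y))"

end

theory Submission
  imports Defs
begin

text \<open>Compactness turns the strict uniqueness of the minimiser B(Y) into a uniform gap: the
  graph of B is the closed set of minimising pairs, hence compact, so for every t > 0 the excess
  C(x, Y) - C(B(Y), Y) attains a positive minimum on the compact set of (x, Y) with
  d(x, B(Y)) \<ge> t. The modulus \<eta>(s) is the supremum of the gaps that are valid beyond some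
  threshold t < s (capped at 1 to keep the supremum finite); the strict inequality t < s makes
  \<eta> lower semicontinuous.\<close>

lemma compact_PiE:
  fixes Ys :: "'i \<Rightarrow> 'b::topological_space set"
  assumes "\<And>i. i \<in> I \<Longrightarrow> compact (Ys i)"
  shows "compact (PiE I Ys)"
proof -
  define Z where "Z i = (if i \<in> I then Ys i else {undefined})" for i
  have "PiE I Ys = PiE UNIV Z"
    by (auto simp: PiE_iff Z_def extensional_def split: if_splits)
  moreover have "compactin (product_topology (\<lambda>_. euclidean) UNIV) (PiE UNIV Z)"
    by (simp add: compactin_PiE Z_def assms)
  ultimately show ?thesis
    by (simp add: euclidean_product_topology)
qed

lemma continuous_on_sum_coordinates:
  fixes c :: "'i \<Rightarrow> 'a::topological_space \<Rightarrow> 'b::topological_space \<Rightarrow> real"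
  assumes "\<And>i. i \<in> I \<Longrightarrow> continuous_on (X \<times> Ys i) (\<lambda>(x, y). c i x y)"
  shows "continuous_on (X \<times> PiE I Ys) (\<lambda>(x, Y). \<Sum>i\<in>I. c i x (Y i))"
  unfolding case_prod_unfold
proof (intro continuous_on_sum)
  fix i assume i: "i \<in> I"
  have "continuous_on (X \<times> PiE I Ys) (\<lambda>q. (fst q, snd q i))"
    by (intro continuous_intros continuous_on_product_then_coordinatewise)
  moreover have "(\<lambda>q. (fst q, snd q i)) ` (X \<times> PiE I Ys) \<subseteq> X \<times> Ys i"
    using i by auto
  ultimately have "continuous_on (X \<times> PiE I Ys) (\<lambda>q. (\<lambda>(x, y). c i x y) (fst q, snd q i))"
    by (rule continuous_on_compose2[OF assms[OF i]])
  then show "continuous_on (X \<times> PiE I Ys) (\<lambda>q. c i (fst q) (snd q i))"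
    by simp
qed

lemma compact_unique_argmin_graph:
  fixes F :: "'a::topological_space \<Rightarrow> 'p::topological_space \<Rightarrow> real"
  assumes "compact X" "compact P"
    and F_cont: "continuous_on (X \<times> P) (\<lambda>(x, p). F x p)"
    and B_in: "\<And>p. p \<in> P \<Longrightarrow> B p \<in> X"
    and B_min: "\<And>p x. p \<in> P \<Longrightarrow> x \<in> X \<Longrightarrow> x \<noteq> B p \<Longrightarrow> F (B p) p < F x p"
  shows "compact ((\<lambda>p. (B p, p)) ` P)"
proof (cases "X = {}")
  case True
  then have "P = {}"
    using B_in by blast
  then show ?thesis
    by simp
next
  case False
  have "(\<lambda>p. (B p, p)) ` P =
      (\<Inter>z\<in>X. (X \<times> P) \<inter> (\<lambda>q. F (fst q) (snd q) - F z (snd q)) -` {..0})"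
    using B_in B_min False by (force simp: image_iff less_le_not_le)
  moreover have "closedin (top_of_set (X \<times> P))
      (\<Inter>z\<in>X. (X \<times> P) \<inter> (\<lambda>q. F (fst q) (snd q) - F z (snd q)) -` {..0})"
  proof (intro closedin_INT False continuous_closedin_preimage continuous_on_diff)
    fix z assume "z \<in> X"
    have "continuous_on (X \<times> P) (\<lambda>q. (z, snd q))"
      by (intro continuous_intros)
    moreover have "(\<lambda>q. (z, snd q)) ` (X \<times> P) \<subseteq> X \<times> P"
      using \<open>z \<in> X\<close> by auto
    ultimately have "continuous_on (X \<times> P) (\<lambda>q. (\<lambda>(x, p). F x p) (z, snd q))"
      by (rule continuous_on_compose2[OF F_cont])
    then show "continuous_on (X \<times> P) (\<lambda>q. F z (snd q))"
      by simp
  qed (use F_cont in \<open>simp_all add: case_prod_unfold\<close>)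
  ultimately show ?thesis
    using closedin_compact[OF compact_Times[OF assms(1,2)]] by simp
qed

lemma compact_pos_continuous_bounded_below:
  fixes H :: "'a::topological_space \<Rightarrow> real"
  assumes "compact T" "continuous_on T H" "\<And>q. q \<in> T \<Longrightarrow> 0 < H q"
  shows "\<exists>e>0. \<forall>q\<in>T. e \<le> H q"
proof (cases "T = {}")
  case False
  then obtain q0 where "q0 \<in> T" "\<forall>q\<in>T. H q0 \<le> H q"
    using continuous_attains_inf assms(1,2) by blast
  then show ?thesis
    using assms(3) by blast
qed (auto intro: exI[of _ 1])

lemma unique_argmin_uniform_gap:
  fixes X :: "'a::metric_space set" and F :: "'a \<Rightarrow> 'p::topological_space \<Rightarrow> real"
  assumes "compact X" "compact P"
    and F_cont: "continuous_on (X \<times> P) (\<lambda>(x, p). F x p)"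
    and B_in: "\<And>p. p \<in> P \<Longrightarrow> B p \<in> X"
    and B_min: "\<And>p x. p \<in> P \<Longrightarrow> x \<in> X \<Longrightarrow> x \<noteq> B p \<Longrightarrow> F (B p) p < F x p"
    and "t > 0"
  shows "\<exists>e>0. \<forall>x\<in>X. \<forall>p\<in>P. t \<le> dist x (B p) \<longrightarrow> F (B p) p + e \<le> F x p"
proof -
  \<comment> \<open>Triples (x, B p, p): the graph of B is compact although B is not known to be continuous.\<close>
  define T where "T = (X \<times> (\<lambda>p. (B p, p)) ` P) \<inter> {q. t \<le> dist (fst q) (fst (snd q))}"
  define H where "H q = F (fst q) (snd (snd q)) - F (fst (snd q)) (snd (snd q))" for q
  have "compact T"
    unfolding T_def using assms(1-5)
    by (intro compact_Int_closed compact_Times compact_unique_argmin_graph closed_Collect_le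
        continuous_intros)
  have F_comp: "continuous_on T (\<lambda>q. F (f q) (snd (snd q)))"
    if "continuous_on T f" "\<And>q. q \<in> T \<Longrightarrow> f q \<in> X" for f
  proof -
    have "continuous_on T (\<lambda>q. (\<lambda>(x, p). F x p) (f q, snd (snd q)))"
      using that B_in
      by (intro continuous_on_compose2[OF F_cont] continuous_intros) (auto simp: T_def)
    then show ?thesis
      by simp
  qed
  have "continuous_on T H"
    unfolding H_def using B_in by (intro continuous_on_diff F_comp continuous_intros) (auto simp: T_def)
  moreover have "0 < H q" if "q \<in> T" for q
    using that B_min \<open>t > 0\<close> by (fastforce simp: T_def H_def)
  ultimately obtain e where "e > 0" "\<forall>q\<in>T. e \<le> H q"
    using compact_pos_continuous_bounded_below \<open>compact T\<close> by blast
  moreover have "(x, B p, p) \<in> T" if "x \<in> X" "p \<in> P" "t \<le> dist x (B p)" for x p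
    using that by (auto simp: T_def)
  ultimately show ?thesis
    unfolding H_def by force
qed

context
  fixes I :: "'i set" and d g :: "'i \<Rightarrow> real"
begin

definition uniform_margins :: "real \<Rightarrow> real set" where
  "uniform_margins s = {e \<in> {0..1}. \<exists>t\<in>{0<..<s}. \<forall>i\<in>I. t \<le> d i \<longrightarrow> e \<le> g i}"

definition gap_modulus :: "real \<Rightarrow> real" where
  "gap_modulus s = (if s \<le> 0 then 0 else Sup (uniform_margins s))"

lemma uniform_margins_mono: "r \<le> s \<Longrightarrow> uniform_margins r \<subseteq> uniform_margins s"
  unfolding uniform_margins_def by auto

lemma bdd_above_uniform_margins: "bdd_above (uniform_margins s)"
  unfolding uniform_margins_def by (rule bdd_aboveI[of _ 1]) auto

lemma le_gap_modulus: "e \<in> uniform_margins s \<Longrightarrow> 0 < s \<Longrightarrow> e \<le> gap_modulus s"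
  unfolding gap_modulus_def by (simp add: cSup_upper bdd_above_uniform_margins)

context
  assumes g_nonneg: "\<And>i. i \<in> I \<Longrightarrow> 0 \<le> g i"
begin

lemma zero_in_uniform_margins: "0 < s \<Longrightarrow> 0 \<in> uniform_margins s"
  unfolding uniform_margins_def using g_nonneg dense[of 0 s] by auto

lemma gap_modulus_nonneg: "0 \<le> gap_modulus s"
  using le_gap_modulus[OF zero_in_uniform_margins] by (cases "s \<le> 0") (auto simp: gap_modulus_def)

lemma mono_gap_modulus: "mono gap_modulus"
proof
  fix r s :: real
  assume "r \<le> s"
  show "gap_modulus r \<le> gap_modulus s"
  proof (cases "r \<le> 0")
    case True
    then show ?thesis
      using gap_modulus_nonneg by (simp add: gap_modulus_def)
  next
    case False
    then have "0 \<in> uniform_margins r"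
      by (simp add: zero_in_uniform_margins)
    then have "Sup (uniform_margins r) \<le> Sup (uniform_margins s)"
      using uniform_margins_mono[OF \<open>r \<le> s\<close>]
      by (intro cSup_subset_mono bdd_above_uniform_margins) auto
    then show ?thesis
      using False \<open>r \<le> s\<close> by (simp add: gap_modulus_def)
  qed
qed

lemma gap_modulus_pos:
  assumes gap: "\<And>t. 0 < t \<Longrightarrow> \<exists>e>0. \<forall>i\<in>I. t \<le> d i \<longrightarrow> e \<le> g i" and "0 < s"
  shows "0 < gap_modulus s"
proof -
  obtain e where "e > 0" and e: "\<forall>i\<in>I. s / 2 \<le> d i \<longrightarrow> e \<le> g i"
    using gap[of "s / 2"] \<open>0 < s\<close> by auto
  have "s / 2 \<in> {0<..<s}"
    using \<open>0 < s\<close> by simp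
  then have "min e 1 \<in> uniform_margins s"
    using e \<open>e > 0\<close> unfolding uniform_margins_def by fastforce
  then have "min e 1 \<le> gap_modulus s"
    using \<open>0 < s\<close> by (rule le_gap_modulus)
  then show ?thesis
    using \<open>e > 0\<close> by linarith
qed

lemma gap_modulus_le:
  assumes "i \<in> I"
  shows "gap_modulus (d i) \<le> g i"
proof (cases "d i \<le> 0")
  case True
  then show ?thesis
    using g_nonneg[OF assms] by (simp add: gap_modulus_def)
next
  case False
  have "e \<le> g i" if "e \<in> uniform_margins (d i)" for e
  proof -
    from that obtain t where "t < d i" and "\<forall>j\<in>I. t \<le> d j \<longrightarrow> e \<le> g j"
      unfolding uniform_margins_def by auto
    then show ?thesis
      using assms by auto
  qed
  then have "Sup (uniform_margins (d i)) \<le> g i"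
    using zero_in_uniform_margins[of "d i"] False by (intro cSup_least) auto
  then show ?thesis
    using False by (simp add: gap_modulus_def)
qed

lemma lsc_on_gap_modulus: "lsc_on A gap_modulus"
  unfolding lsc_on_def
proof (intro ballI allI impI)
  fix s y assume "y < gap_modulus s"
  show "\<exists>\<epsilon>>0. \<forall>r\<in>A. dist r s < \<epsilon> \<longrightarrow> y < gap_modulus r"
  proof (cases "s \<le> 0")
    case True
    then have "y < 0"
      using \<open>y < gap_modulus s\<close> by (simp add: gap_modulus_def)
    show ?thesis
    proof (intro exI[of _ 1] conjI ballI impI)
      fix r
      show "y < gap_modulus r"
        using \<open>y < 0\<close> gap_modulus_nonneg[of r] by linarith
    qed simp
  next
    case False
    then have "0 \<in> uniform_margins s"
      by (simp add: zero_in_uniform_margins)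
    then have "uniform_margins s \<noteq> {}"
      by blast
    moreover have "y < Sup (uniform_margins s)"
      using \<open>y < gap_modulus s\<close> False by (simp add: gap_modulus_def)
    ultimately obtain e where "e \<in> uniform_margins s" "y < e"
      using less_cSup_iff[OF _ bdd_above_uniform_margins] by blast
    then obtain t where "0 < t" "t < s" "e \<in> {0..1}" and t: "\<forall>i\<in>I. t \<le> d i \<longrightarrow> e \<le> g i"
      unfolding uniform_margins_def by auto
    show ?thesis
    proof (intro exI[of _ "s - t"] conjI ballI impI)
      fix r assume "dist r s < s - t"
      then have "t \<in> {0<..<r}"
        using \<open>0 < t\<close> by (simp add: dist_real_def abs_less_iff)
      then have "e \<in> uniform_margins r"
        using t \<open>e \<in> {0..1}\<close> unfolding uniform_margins_def by blast
      then have "e \<le> gap_modulus r"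
        using \<open>t \<in> {0<..<r}\<close> by (intro le_gap_modulus) auto
      then show "y < gap_modulus r"
        using \<open>y < e\<close> by linarith
    qed (use \<open>t < s\<close> in simp)
  qed
qed

end

end

lemma unique_argmin_modulus:
  fixes X :: "'a::metric_space set" and F :: "'a \<Rightarrow> 'p::topological_space \<Rightarrow> real"
  assumes "compact X" "compact P"
    and "continuous_on (X \<times> P) (\<lambda>(x, p). F x p)"
    and "\<And>p. p \<in> P \<Longrightarrow> B p \<in> X"
    and B_min: "\<And>p x. p \<in> P \<Longrightarrow> x \<in> X \<Longrightarrow> x \<noteq> B p \<Longrightarrow> F (B p) p < F x p"
  obtains \<eta> :: "real \<Rightarrow> real"
  where "\<And>A. lsc_on A \<eta>" "mono \<eta>" "\<And>s. 0 \<le> \<eta> s" "\<eta> 0 = 0" "\<And>s. 0 < s \<Longrightarrow> 0 < \<eta> s"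
    and "\<And>x p. x \<in> X \<Longrightarrow> p \<in> P \<Longrightarrow> F (B p) p + \<eta> (dist x (B p)) \<le> F x p"
proof -
  define dist_B where "dist_B q = dist (fst q) (B (snd q))" for q
  define excess where "excess q = F (fst q) (snd q) - F (B (snd q)) (snd q)" for q
  have excess_nonneg: "0 \<le> excess q" if "q \<in> X \<times> P" for q
    using B_min that unfolding excess_def by (cases "fst q = B (snd q)") force+
  have gap: "\<exists>e>0. \<forall>q\<in>X \<times> P. t \<le> dist_B q \<longrightarrow> e \<le> excess q" if "0 < t" for t
    using unique_argmin_uniform_gap[OF assms that] unfolding dist_B_def excess_def by fastforce
  define \<eta> where "\<eta> = gap_modulus (X \<times> P) dist_B excess"
  show ?thesis
  proof
    show "lsc_on A \<eta>" for A
      unfolding \<eta>_def using excess_nonneg by (rule lsc_on_gap_modulus)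
    show "mono \<eta>"
      unfolding \<eta>_def using excess_nonneg by (rule mono_gap_modulus)
    show "0 \<le> \<eta> s" for s
      unfolding \<eta>_def using excess_nonneg by (rule gap_modulus_nonneg)
    show "\<eta> 0 = 0"
      by (simp add: \<eta>_def gap_modulus_def)
    show "0 < \<eta> s" if "0 < s" for s
      unfolding \<eta>_def using excess_nonneg gap that by (rule gap_modulus_pos)
    show "F (B p) p + \<eta> (dist x (B p)) \<le> F x p" if "x \<in> X" "p \<in> P" for x p
    proof -
      have "\<eta> (dist_B (x, p)) \<le> excess (x, p)"
        unfolding \<eta>_def by (rule gap_modulus_le[where d = dist_B]) (use excess_nonneg that in auto)
      then show ?thesis
        unfolding dist_B_def excess_def by simp
    qed
  qed
qed

theorem lemma5:
  fixes X :: "'a::metric_space set"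
    and Ys :: "nat \<Rightarrow> 'b::metric_space set"
    and K :: nat
    and c :: "nat \<Rightarrow> 'a \<Rightarrow> 'b \<Rightarrow> real"
    and B :: "(nat \<Rightarrow> 'b) \<Rightarrow> 'a"
  assumes compX: "compact X"
    and compY: "\<And>k. k < K \<Longrightarrow> compact (Ys k)"
    and cont: "\<And>k. k < K \<Longrightarrow> continuous_on (X \<times> Ys k) (\<lambda>(x, y). c k x y)"
    and nonneg: "\<And>k x y. k < K \<Longrightarrow> x \<in> X \<Longrightarrow> y \<in> Ys k \<Longrightarrow> c k x y \<ge> 0"
    and B_in: "\<And>Y. Y \<in> PiE {..<K} Ys \<Longrightarrow> B Y \<in> X"
    and B_unique_min: "\<And>Y x. Y \<in> PiE {..<K} Ys \<Longrightarrow> x \<in> X \<Longrightarrow> x \<noteq> B Y \<Longrightarrow>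
                 (\<Sum>k<K. c k (B Y) (Y k)) < (\<Sum>k<K. c k x (Y k))"
    and nontriv: "\<exists>x\<in>X. \<exists>Y\<in>PiE {..<K} Ys. x \<noteq> B Y"
  shows "\<exists>\<eta> :: real \<Rightarrow> real.
           (let R = (SUP p\<in>X \<times> PiE {..<K} Ys. dist (fst p) (B (snd p))) in
              lsc_on {0..R} \<eta> \<and> mono_on {0..R} \<eta> \<and>
              (\<forall>s\<in>{0..R}. \<eta> s \<ge> 0 \<and> (\<eta> s = 0 \<longleftrightarrow> s = 0)) \<and>
              (\<forall>x\<in>X. \<forall>Y\<in>PiE {..<K} Ys.
                  (\<Sum>k<K. c k x (Y k)) \<ge> (\<Sum>k<K. c k (B Y) (Y k)) + \<eta> (dist x (B Y))))"
proof -
  have compP: "compact (PiE {..<K} Ys)"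
    using compY by (intro compact_PiE) auto
  have C_cont: "continuous_on (X \<times> PiE {..<K} Ys) (\<lambda>(x, Y). \<Sum>k<K. c k x (Y k))"
    using cont by (intro continuous_on_sum_coordinates) auto
  obtain \<eta> :: "real \<Rightarrow> real" where
    "\<And>A. lsc_on A \<eta>" "mono \<eta>" "\<And>s. 0 \<le> \<eta> s" and
    \<eta>_0: "\<eta> 0 = 0" and \<eta>_pos: "\<And>s. 0 < s \<Longrightarrow> 0 < \<eta> s" and
    "\<And>x Y. x \<in> X \<Longrightarrow> Y \<in> PiE {..<K} Ys \<Longrightarrow>
      (\<Sum>k<K. c k (B Y) (Y k)) + \<eta> (dist x (B Y)) \<le> (\<Sum>k<K. c k x (Y k))"
    using unique_argmin_modulus[OF compX compP C_cont B_in B_unique_min] by blast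
  moreover have "\<eta> s = 0 \<longleftrightarrow> s = 0" if "0 \<le> s" for s
  proof (cases "s = 0")
    case False
    then show ?thesis
      using \<eta>_pos[of s] that by simp
  qed (simp add: \<eta>_0)
  ultimately show ?thesis
    unfolding Let_def by (intro exI[of _ \<eta>]) (auto intro: mono_imp_mono_on)
qed

end
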